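(* For any $\alpha>0$, integers $n,m$ with $m>n$, $n$ dividing $m$ and $m/n>2$, and $k$ with $n\le k\le m$, there exists a full rank matrix $X\in\mathbb{R}^{n\times m}$ such that for every subset $\mathcal S\subseteq[m]$ of cardinality $k$ with $\mathrm{rank}(X_{\mathcal S})=n$, $$\|X_{\mathcal S}^{\dagger}\|_F^2\ge\Big(\frac{m-k}{k+\alpha^2}+1-\frac{k}{n}\Big)\|X^{\dagger}\|_F^2 .$$
   Context: $[m]=\{1,\dots,m\}$; $X_{\mathcal S}$ is the submatrix of columns of $X$ indexed by $\mathcal S$; $A^\dagger$ is the Moore–Penrose pseudo-inverse; $\|\cdot\|_F$ is the Frobenius norm. *)

theory Defs
  imports "Jordan_Normal_Form.DL_Rank" "Jordan_Normal_Form.DL_Submatrix"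
begin

definition pinv :: "real mat \<Rightarrow> real mat" where
  "pinv A = (THE B. B \<in> carrier_mat (dim_col A) (dim_row A) \<and>
       A * B * A = A \<and> B * A * B = B \<and>
       transpose_mat (A * B) = A * B \<and> transpose_mat (B * A) = B * A)"

definition fro_norm :: "real mat \<Rightarrow> real" where
  "fro_norm A = sqrt (\<Sum>i<dim_row A. \<Sum>j<dim_col A. (A $$ (i,j))^2)"

text \<open>Column submatrix X_S (columns indexed by S, 0-based, in increasing order).\<close>
definition col_sub :: "real mat \<Rightarrow> nat set \<Rightarrow> real mat" where
  "col_sub X S = submatrix X {0..<dim_row X} S"

end

theory Submission
  imports Defs "HOL-Analysis.Convex"
begin

text \<open>
  Let \<open>X\<close> be the selection matrix whose column \<open>j\<close> is the unit vector \<open>e (j mod n)\<close>,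
  so each unit vector occurs \<open>m/n\<close> times. If column \<open>j\<close> of a selection matrix is
  \<open>e (\<sigma> j)\<close> and \<open>c i\<close> counts the columns equal to \<open>e i\<close>, its pseudo-inverse is the
  transpose with row \<open>j\<close> scaled by \<open>1 / c (\<sigma> j)\<close>. Hence \<open>\<parallel>X\<^sup>\<dagger>\<parallel>\<^sup>2 = n\<^sup>2/m\<close>, while a column
  submatrix \<open>X\<^sub>S\<close> is again a selection matrix with \<open>\<parallel>X\<^sub>S\<^sup>\<dagger>\<parallel>\<^sup>2 = \<Sum>\<^sub>j 1 / c (\<sigma> j)\<^sup>2\<close>.
  Grouping the columns by value gives \<open>\<Sum>\<^sub>j 1 / c (\<sigma> j) = rank X\<^sub>S = n\<close>, so Cauchy--Schwarz
  yields \<open>\<parallel>X\<^sub>S\<^sup>\<dagger>\<parallel>\<^sup>2 \<ge> n\<^sup>2/k\<close>. As the coefficient in the claim is at most \<open>m/k\<close>, the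
  right-hand side is at most \<open>n\<^sup>2/k\<close>.
\<close>

definition is_pinv :: "real mat \<Rightarrow> real mat \<Rightarrow> bool" where
  "is_pinv A B \<longleftrightarrow> A * B * A = A \<and> B * A * B = B \<and>
       transpose_mat (A * B) = A * B \<and> transpose_mat (B * A) = B * A"

lemma is_pinv_unique:
  fixes A B C :: "real mat"
  assumes A: "A \<in> carrier_mat n k" and B: "B \<in> carrier_mat k n" and C: "C \<in> carrier_mat k n"
    and pB: "is_pinv A B" and pC: "is_pinv A C"
  shows "B = C"
proof -
  note pB' = pB[unfolded is_pinv_def] and pC' = pC[unfolded is_pinv_def]
  have AB: "A * B = A * C"
  proof -
    have "A * B = (A * C) * (A * B)"
      using pC' assoc_mult_mat[OF A C A] assoc_mult_mat[OF mult_carrier_mat[OF A C] A B] by simp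
    also have "\<dots> = transpose_mat ((A * B) * (A * C))"
      using pB' pC' transpose_mult[OF mult_carrier_mat[OF A B] mult_carrier_mat[OF A C]] by simp
    also have "(A * B) * (A * C) = A * C"
      using pB' assoc_mult_mat[OF A B A] assoc_mult_mat[OF mult_carrier_mat[OF A B] A C] by simp
    finally show ?thesis using pC' by simp
  qed
  have BA: "B * A = C * A"
  proof -
    have "B * A = (B * A) * (C * A)"
      using pC' assoc_mult_mat[OF B A mult_carrier_mat[OF C A]] assoc_mult_mat[OF mult_carrier_mat[OF B A] C A]
      by (simp add: assoc_mult_mat[OF A C A])
    also have "\<dots> = transpose_mat ((C * A) * (B * A))"
      using pB' pC' transpose_mult[OF mult_carrier_mat[OF C A] mult_carrier_mat[OF B A]] by simp
    also have "(C * A) * (B * A) = C * A"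
      using pB' assoc_mult_mat[OF C A mult_carrier_mat[OF B A]] by (simp add: assoc_mult_mat[OF A B A])
    finally show ?thesis using pC' by simp
  qed
  have "B = B * (A * C)" using pB' AB assoc_mult_mat[OF B A B] by simp
  also have "\<dots> = (C * A) * C" using BA assoc_mult_mat[OF B A C] by simp
  also have "\<dots> = C" using pC' by simp
  finally show ?thesis .
qed

lemma pinv_eqI:
  assumes "A \<in> carrier_mat n k" and "B \<in> carrier_mat k n" and "is_pinv A B"
  shows "pinv A = B"
  unfolding pinv_def
proof (rule the_equality)
  show "B \<in> carrier_mat (dim_col A) (dim_row A) \<and> A * B * A = A \<and> B * A * B = B \<and>
      transpose_mat (A * B) = A * B \<and> transpose_mat (B * A) = B * A"
    using assms unfolding is_pinv_def by auto
next
  fix C assume "C \<in> carrier_mat (dim_col A) (dim_row A) \<and> A * C * A = A \<and> C * A * C = C \<and>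
      transpose_mat (A * C) = A * C \<and> transpose_mat (C * A) = C * A"
  then show "C = B"
    using is_pinv_unique[OF assms(1) _ assms(2) _ assms(3)] assms(1) unfolding is_pinv_def by auto
qed

definition fiber_card :: "nat \<Rightarrow> (nat \<Rightarrow> nat) \<Rightarrow> nat \<Rightarrow> nat" where
  "fiber_card k \<sigma> i = card {j. j < k \<and> \<sigma> j = i}"

definition sel_mat :: "nat \<Rightarrow> nat \<Rightarrow> (nat \<Rightarrow> nat) \<Rightarrow> real mat" where
  "sel_mat n k \<sigma> = mat n k (\<lambda>(i, j). if \<sigma> j = i then 1 else 0)"

definition sel_pinv :: "nat \<Rightarrow> nat \<Rightarrow> (nat \<Rightarrow> nat) \<Rightarrow> real mat" where
  "sel_pinv n k \<sigma> = mat k n (\<lambda>(j, i). if \<sigma> j = i then 1 / real (fiber_card k \<sigma> i) else 0)"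

lemma sel_mat_carrier [simp]: "sel_mat n k \<sigma> \<in> carrier_mat n k"
  by (simp add: sel_mat_def)

lemma sel_pinv_carrier [simp]: "sel_pinv n k \<sigma> \<in> carrier_mat k n"
  by (simp add: sel_pinv_def)

lemma fiber_card_pos: "j < k \<Longrightarrow> 0 < fiber_card k \<sigma> (\<sigma> j)"
  unfolding fiber_card_def by (subst card_gt_0_iff) auto

lemma sum_if_eq_fiber_card: "(\<Sum>j<k. if \<sigma> j = i then a else 0) = real (fiber_card k \<sigma> i) * (a :: real)"
proof -
  have "(\<Sum>j<k. if \<sigma> j = i then a else 0) = (\<Sum>j\<in>{j. j < k \<and> \<sigma> j = i}. a)"
    by (rule sum.mono_neutral_cong_right) auto
  then show ?thesis by (simp add: fiber_card_def)
qed

lemma sel_mat_mult_sel_pinv: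
  "sel_mat n k \<sigma> * sel_pinv n k \<sigma> = mat n n (\<lambda>(i, i'). if i = i' \<and> 0 < fiber_card k \<sigma> i then 1 else 0)"
proof (rule eq_matI)
  fix i i' assume "i < dim_row (mat n n (\<lambda>(i, i'). if i = i' \<and> 0 < fiber_card k \<sigma> i then 1 else (0::real)))"
    and "i' < dim_col (mat n n (\<lambda>(i, i'). if i = i' \<and> 0 < fiber_card k \<sigma> i then 1 else (0::real)))"
  then have i: "i < n" and i': "i' < n" by auto
  have "(sel_mat n k \<sigma> * sel_pinv n k \<sigma>) $$ (i, i') =
      (\<Sum>j<k. if \<sigma> j = i then (if i = i' then 1 / real (fiber_card k \<sigma> i) else 0) else 0)"
    using i i' by (auto simp: sel_mat_def sel_pinv_def scalar_prod_def lessThan_atLeast0 intro!: sum.cong)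
  also have "\<dots> = real (fiber_card k \<sigma> i) * (if i = i' then 1 / real (fiber_card k \<sigma> i) else 0)"
    by (rule sum_if_eq_fiber_card)
  finally show "(sel_mat n k \<sigma> * sel_pinv n k \<sigma>) $$ (i, i') =
      mat n n (\<lambda>(i, i'). if i = i' \<and> 0 < fiber_card k \<sigma> i then 1 else 0) $$ (i, i')"
    using i i' by auto
qed (auto simp: sel_mat_def sel_pinv_def)

lemma sel_pinv_mult_sel_mat:
  assumes "\<forall>j<k. \<sigma> j < n"
  shows "sel_pinv n k \<sigma> * sel_mat n k \<sigma> =
    mat k k (\<lambda>(j, j'). if \<sigma> j = \<sigma> j' then 1 / real (fiber_card k \<sigma> (\<sigma> j)) else 0)"
proof (rule eq_matI)
  fix j j' assume "j < dim_row (mat k k (\<lambda>(j, j'). if \<sigma> j = \<sigma> j' then 1 / real (fiber_card k \<sigma> (\<sigma> j)) else (0::real)))"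
    and "j' < dim_col (mat k k (\<lambda>(j, j'). if \<sigma> j = \<sigma> j' then 1 / real (fiber_card k \<sigma> (\<sigma> j)) else (0::real)))"
  then have j: "j < k" and j': "j' < k" by auto
  have "\<And>P Q a. (if P then a else 0) * (if Q then 1 else 0) = (if Q \<and> P then a else 0 :: real)"
    by simp
  then have "(sel_pinv n k \<sigma> * sel_mat n k \<sigma>) $$ (j, j') =
      (if \<sigma> j' = \<sigma> j then 1 / real (fiber_card k \<sigma> (\<sigma> j)) else 0)"
    using assms j j' by (simp add: sel_mat_def sel_pinv_def scalar_prod_def lessThan_atLeast0 sum.delta')
  then show "(sel_pinv n k \<sigma> * sel_mat n k \<sigma>) $$ (j, j') =
      mat k k (\<lambda>(j, j'). if \<sigma> j = \<sigma> j' then 1 / real (fiber_card k \<sigma> (\<sigma> j)) else 0) $$ (j, j')"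
    using j j' by auto
qed (auto simp: sel_mat_def sel_pinv_def)

lemma is_pinv_sel_mat:
  assumes "\<forall>j<k. \<sigma> j < n"
  shows "is_pinv (sel_mat n k \<sigma>) (sel_pinv n k \<sigma>)"
  unfolding is_pinv_def
proof (intro conjI)
  have ite: "\<And>P Q a b. (if P then a else 0) * (if Q then b else 0) = (if P \<and> Q then a * b else 0 :: real)"
    by simp
  show "sel_mat n k \<sigma> * sel_pinv n k \<sigma> * sel_mat n k \<sigma> = sel_mat n k \<sigma>"
    unfolding sel_mat_mult_sel_pinv
  proof (rule eq_matI)
    fix i j assume i: "i < dim_row (sel_mat n k \<sigma>)" and j: "j < dim_col (sel_mat n k \<sigma>)"
    have "(mat n n (\<lambda>(i, i'). if i = i' \<and> 0 < fiber_card k \<sigma> i then 1 else 0) * sel_mat n k \<sigma>) $$ (i, j)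
       = (if 0 < fiber_card k \<sigma> i \<and> \<sigma> j = i then 1 else 0)"
      using i j by (simp add: sel_mat_def scalar_prod_def lessThan_atLeast0 ite sum.delta)
    also have "\<dots> = sel_mat n k \<sigma> $$ (i, j)"
      using i j fiber_card_pos[of j k \<sigma>] by (auto simp: sel_mat_def)
    finally show "(mat n n (\<lambda>(i, i'). if i = i' \<and> 0 < fiber_card k \<sigma> i then 1 else 0) * sel_mat n k \<sigma>) $$ (i, j)
       = sel_mat n k \<sigma> $$ (i, j)" .
  qed (auto simp: sel_mat_def)
  show "sel_pinv n k \<sigma> * sel_mat n k \<sigma> * sel_pinv n k \<sigma> = sel_pinv n k \<sigma>"
    unfolding sel_pinv_mult_sel_mat[OF assms]
  proof (rule eq_matI)
    fix j i assume j: "j < dim_row (sel_pinv n k \<sigma>)" and i: "i < dim_col (sel_pinv n k \<sigma>)"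
    have "(mat k k (\<lambda>(j, j'). if \<sigma> j = \<sigma> j' then 1 / real (fiber_card k \<sigma> (\<sigma> j)) else 0) * sel_pinv n k \<sigma>) $$ (j, i)
       = (\<Sum>j'<k. if \<sigma> j' = i then (if \<sigma> j = i then 1 / real (fiber_card k \<sigma> i) ^ 2 else 0) else 0)"
      using i j by (auto simp: sel_pinv_def scalar_prod_def lessThan_atLeast0 power2_eq_square intro!: sum.cong)
    also have "\<dots> = real (fiber_card k \<sigma> i) * (if \<sigma> j = i then 1 / real (fiber_card k \<sigma> i) ^ 2 else 0)"
      by (rule sum_if_eq_fiber_card)
    also have "\<dots> = sel_pinv n k \<sigma> $$ (j, i)"
      using i j fiber_card_pos[of j k \<sigma>] by (auto simp: sel_pinv_def power2_eq_square)
    finally show "(mat k k (\<lambda>(j, j'). if \<sigma> j = \<sigma> j' then 1 / real (fiber_card k \<sigma> (\<sigma> j)) else 0) * sel_pinv n k \<sigma>) $$ (j, i)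
       = sel_pinv n k \<sigma> $$ (j, i)" .
  qed (auto simp: sel_pinv_def)
  show "transpose_mat (sel_mat n k \<sigma> * sel_pinv n k \<sigma>) = sel_mat n k \<sigma> * sel_pinv n k \<sigma>"
    unfolding sel_mat_mult_sel_pinv by (rule eq_matI) auto
  show "transpose_mat (sel_pinv n k \<sigma> * sel_mat n k \<sigma>) = sel_pinv n k \<sigma> * sel_mat n k \<sigma>"
    unfolding sel_pinv_mult_sel_mat[OF assms] by (rule eq_matI) auto
qed

lemma pinv_sel_mat:
  assumes "\<forall>j<k. \<sigma> j < n"
  shows "pinv (sel_mat n k \<sigma>) = sel_pinv n k \<sigma>"
  using pinv_eqI[OF sel_mat_carrier sel_pinv_carrier is_pinv_sel_mat[OF assms]] .

lemma fro_norm_sel_pinv: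
  assumes "\<forall>j<k. \<sigma> j < n"
  shows "(fro_norm (sel_pinv n k \<sigma>))\<^sup>2 = (\<Sum>j<k. (1 / real (fiber_card k \<sigma> (\<sigma> j)))\<^sup>2)"
proof -
  have "(fro_norm (sel_pinv n k \<sigma>))\<^sup>2 =
      (\<Sum>j<k. \<Sum>i<n. (if \<sigma> j = i then 1 / real (fiber_card k \<sigma> i) else 0)\<^sup>2)"
    unfolding fro_norm_def by (subst real_sqrt_pow2) (auto simp: sel_pinv_def intro!: sum_nonneg)
  also have "\<dots> = (\<Sum>j<k. (1 / real (fiber_card k \<sigma> (\<sigma> j)))\<^sup>2)"
    using assms by (intro sum.cong refl) (simp add: if_distrib[of power2] sum.delta' cong: if_cong)
  finally show ?thesis .
qed

lemma sum_inverse_fiber_card: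
  "(\<Sum>j<k. 1 / real (fiber_card k \<sigma> (\<sigma> j))) = real (card (\<sigma> ` {..<k}))"
proof -
  have "(\<Sum>j<k. 1 / real (fiber_card k \<sigma> (\<sigma> j))) =
      (\<Sum>i\<in>\<sigma> ` {..<k}. \<Sum>j\<in>{j. j \<in> {..<k} \<and> \<sigma> j = i}. 1 / real (fiber_card k \<sigma> (\<sigma> j)))"
    by (rule sum.image_gen) simp
  also have "\<dots> = (\<Sum>i\<in>\<sigma> ` {..<k}. 1)"
  proof (intro sum.cong refl)
    fix i assume i: "i \<in> \<sigma> ` {..<k}"
    then have "0 < fiber_card k \<sigma> i" using fiber_card_pos by blast
    then show "(\<Sum>j\<in>{j. j \<in> {..<k} \<and> \<sigma> j = i}. 1 / real (fiber_card k \<sigma> (\<sigma> j))) = 1"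
      using i by (auto simp: fiber_card_def)
  qed
  finally show ?thesis by simp
qed

lemma (in vec_space) rank_le_card_cols:
  assumes "A \<in> carrier_mat n nc"
  shows "rank A \<le> card (set (cols A))"
proof -
  obtain S where S: "maximal S (\<lambda>T. T \<subseteq> set (cols A) \<and> lin_indpt T)"
    using maximal_exists[of "\<lambda>T. T \<subseteq> set (cols A) \<and> lin_indpt T" "card (set (cols A))" "{}"]
    by (meson List.finite_set card_mono empty_iff empty_subsetI finite_lin_indpt2 rev_finite_subset)
  then have "card S \<le> card (set (cols A))" by (simp add: card_mono maximal_def)
  then show ?thesis using rank_card_indpt[OF assms S] by simp
qed

lemma cols_sel_mat:
  assumes "\<forall>j<k. \<sigma> j < n"
  shows "set (cols (sel_mat n k \<sigma>)) = unit_vec n ` \<sigma> ` {..<k}"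
proof -
  have "\<And>j. j < k \<Longrightarrow> col (sel_mat n k \<sigma>) j = unit_vec n (\<sigma> j)"
    using assms by (intro eq_vecI) (auto simp: sel_mat_def unit_vec_def)
  then show ?thesis unfolding cols_def by (auto simp: sel_mat_def)
qed

lemma rank_sel_mat:
  assumes \<sigma>: "\<forall>j<k. \<sigma> j < n"
  shows "vec_space.rank n (sel_mat n k \<sigma>) = card (\<sigma> ` {..<k})"
proof -
  interpret vec_space "TYPE(real)" n .
  let ?U = "unit_vec n ` \<sigma> ` {..<k} :: real vec set"
  have cols: "set (cols (sel_mat n k \<sigma>)) = ?U" by (rule cols_sel_mat[OF \<sigma>])
  have "inj_on (unit_vec n :: nat \<Rightarrow> real vec) (\<sigma> ` {..<k})"
    using \<sigma> by (intro inj_onI) auto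
  then have card_U: "card ?U = card (\<sigma> ` {..<k})" by (rule card_image)
  have "?U \<subseteq> set (unit_vecs n)"
    using \<sigma> unfolding unit_vecs_def by auto
  then have "lin_indpt ?U"
    using unit_vecs_basis subset_li_is_li unfolding basis_def by blast
  then have "card ?U \<le> rank (sel_mat n k \<sigma>)"
    by (intro rank_ge_card_indpt[OF sel_mat_carrier]) (simp add: cols)
  moreover have "rank (sel_mat n k \<sigma>) \<le> card ?U"
    using rank_le_card_cols[OF sel_mat_carrier[of n k \<sigma>]] unfolding cols .
  ultimately show ?thesis using card_U by simp
qed

lemma pick_atLeast0LessThan: "i < n \<Longrightarrow> pick {0..<n} i = i"
proof -
  assume i: "i < n"
  have e: "{a. a < n \<and> a \<in> (UNIV :: nat set)} = {0..<n}" by auto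
  have "pick UNIV i = pick {a. a < n \<and> a \<in> (UNIV :: nat set)} i"
    by (rule pick_reduce_set) (simp add: e i)
  then show ?thesis using e pick_UNIV by simp
qed

lemma col_sub_sel_mat:
  assumes S: "S \<subseteq> {0..<m}"
  shows "col_sub (sel_mat n m \<sigma>) S = sel_mat n (card S) (\<lambda>j. \<sigma> (pick S j))"
proof -
  have S_eq: "{j. j < m \<and> j \<in> S} = S" using S by auto
  show ?thesis
    unfolding col_sub_def submatrix_def
  proof (rule eq_matI)
    fix i j assume "i < dim_row (sel_mat n (card S) (\<lambda>j. \<sigma> (pick S j)))"
      and "j < dim_col (sel_mat n (card S) (\<lambda>j. \<sigma> (pick S j)))"
    then have i: "i < n" and j: "j < card S" by (auto simp: sel_mat_def)
    have "pick S j < m" using S j pick_in_set[of j S] by auto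
    then show "mat (card {i. i < dim_row (sel_mat n m \<sigma>) \<and> i \<in> {0..<dim_row (sel_mat n m \<sigma>)}})
          (card {j. j < dim_col (sel_mat n m \<sigma>) \<and> j \<in> S})
          (\<lambda>(i, j). sel_mat n m \<sigma> $$ (pick {0..<dim_row (sel_mat n m \<sigma>)} i, pick S j)) $$ (i, j) =
         sel_mat n (card S) (\<lambda>j. \<sigma> (pick S j)) $$ (i, j)"
      using i j S_eq pick_atLeast0LessThan[OF i] by (simp add: sel_mat_def)
  qed (use S_eq in \<open>auto simp: sel_mat_def\<close>)
qed

lemma fiber_card_mod:
  assumes d: "n dvd m" and i: "i < n"
  shows "fiber_card m (\<lambda>j. j mod n) i = m div n"
proof -
  have "{j. j < m \<and> j mod n = i} = (\<lambda>t. t * n + i) ` {..<m div n}"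
  proof (rule equalityI; rule subsetI)
    fix j assume j: "j \<in> {j. j < m \<and> j mod n = i}"
    then have jm: "j < m" and ji: "j mod n = i" by auto
    have "j div n < m div n"
    proof (rule ccontr)
      assume "\<not> j div n < m div n"
      then have "(m div n) * n \<le> (j div n) * n" by (intro mult_right_mono) auto
      also have "\<dots> \<le> j" using div_mult_mod_eq[of j n] by linarith
      finally show False using jm d by simp
    qed
    moreover have "j = (j div n) * n + i" using div_mult_mod_eq[of j n] ji by simp
    ultimately show "j \<in> (\<lambda>t. t * n + i) ` {..<m div n}" by blast
  next
    fix j assume "j \<in> (\<lambda>t. t * n + i) ` {..<m div n}"
    then obtain t where t: "t < m div n" "j = t * n + i" by auto
    have "t * n + i < (t + 1) * n" using i by simp
    also have "\<dots> \<le> (m div n) * n" using t by (intro mult_right_mono) auto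
    also have "\<dots> = m" using d by simp
    finally show "j \<in> {j. j < m \<and> j mod n = i}" using t i by simp
  qed
  moreover have "inj_on (\<lambda>t. t * n + i) {..<m div n}" using i by (intro inj_onI) simp
  ultimately show ?thesis unfolding fiber_card_def by (simp add: card_image)
qed

lemma fro_norm_pinv_sel_mat_ge:
  assumes "\<forall>j<k. \<sigma> j < n" and "0 < k"
  shows "(real (card (\<sigma> ` {..<k})))\<^sup>2 / real k \<le> (fro_norm (pinv (sel_mat n k \<sigma>)))\<^sup>2"
proof -
  have "(real (card (\<sigma> ` {..<k})))\<^sup>2 \<le> (fro_norm (pinv (sel_mat n k \<sigma>)))\<^sup>2 * real k"
    using sum_squared_le_sum_of_squares[of "\<lambda>j. 1 / real (fiber_card k \<sigma> (\<sigma> j))" "{..<k}"]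
    by (simp only: pinv_sel_mat[OF assms(1)] fro_norm_sel_pinv[OF assms(1)] sum_inverse_fiber_card card_lessThan)
  then show ?thesis using assms(2) by (simp add: divide_le_eq)
qed

lemma fro_norm_pinv_sel_mat_mod:
  assumes "n dvd m" and "0 < n"
  shows "(fro_norm (pinv (sel_mat n m (\<lambda>j. j mod n))))\<^sup>2 = real n ^ 2 / real m"
proof -
  obtain q where m: "m = n * q" using assms(1) by blast
  have "(fro_norm (pinv (sel_mat n m (\<lambda>j. j mod n))))\<^sup>2 = (\<Sum>j<m. (1 / real q)\<^sup>2)"
    using assms fiber_card_mod[OF assms(1)] m
    by (simp add: pinv_sel_mat fro_norm_sel_pinv)
  also have "\<dots> = real n ^ 2 / real m"
    using assms m by (simp add: power2_eq_square field_simps)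
  finally show ?thesis .
qed

lemma coefficient_le_ratio:
  fixes \<alpha> :: real
  assumes "0 < n" and "n \<le> k" and "k \<le> m"
  shows "(real m - real k) / (real k + \<alpha>\<^sup>2) + 1 - real k / real n \<le> real m / real k"
proof -
  have "(real m - real k) / (real k + \<alpha>\<^sup>2) \<le> (real m - real k) / real k"
    using assms by (intro divide_left_mono) (auto intro!: mult_pos_pos add_pos_nonneg)
  also have "\<dots> = real m / real k - 1" using assms by (simp add: field_simps)
  finally have "(real m - real k) / (real k + \<alpha>\<^sup>2) \<le> real m / real k - 1" .
  moreover have "1 \<le> real k / real n" using assms by simp
  ultimately show ?thesis by linarith
qed

theorem theorem4p5:
  fixes \<alpha> :: real and n m k :: nat
  assumes "\<alpha> > 0" and "m > n" and "n dvd m" and "real m / real n > 2"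
    and "n \<le> k" and "k \<le> m"
  shows "\<exists>X :: real mat. X \<in> carrier_mat n m \<and> vec_space.rank n X = n \<and>
    (\<forall>S. S \<subseteq> {0..<m} \<and> card S = k \<and> vec_space.rank n (col_sub X S) = n \<longrightarrow>
       (fro_norm (pinv (col_sub X S)))^2 \<ge>
         ((real m - real k) / (real k + \<alpha>^2) + 1 - real k / real n) * (fro_norm (pinv X))^2)"
proof (intro exI conjI allI impI)
  \<comment> \<open>The ratio hypothesis only excludes \<open>n = 0\<close> (where \<open>m / n = 0\<close>).\<close>
  have n: "0 < n" using assms(4) by (cases "n = 0") auto
  let ?X = "sel_mat n m (\<lambda>j. j mod n)"
  show "?X \<in> carrier_mat n m" by simp
  have "(\<lambda>j. j mod n) ` {..<m} = {..<n}"
    using n assms(2) by (auto simp: image_iff) (metis lessThan_iff mod_less less_trans)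
  then show "vec_space.rank n ?X = n" using n by (simp add: rank_sel_mat)
  fix S assume S: "S \<subseteq> {0..<m} \<and> card S = k \<and> vec_space.rank n (col_sub ?X S) = n"
  define \<sigma> where "\<sigma> = (\<lambda>j. pick S j mod n)"
  have \<sigma>: "\<forall>j<k. \<sigma> j < n" using n unfolding \<sigma>_def by simp
  have sub: "col_sub ?X S = sel_mat n k \<sigma>" using S col_sub_sel_mat unfolding \<sigma>_def by blast
  then have "card (\<sigma> ` {..<k}) = n" using S rank_sel_mat[OF \<sigma>] by simp
  then have "real n ^ 2 / real k \<le> (fro_norm (pinv (col_sub ?X S)))\<^sup>2"
    using sub fro_norm_pinv_sel_mat_ge[OF \<sigma>] n assms(5) by simp
  moreover have "((real m - real k) / (real k + \<alpha>\<^sup>2) + 1 - real k / real n) * (real n ^ 2 / real m)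
      \<le> real m / real k * (real n ^ 2 / real m)"
    using coefficient_le_ratio n assms(5,6) by (intro mult_right_mono) auto
  ultimately show "((real m - real k) / (real k + \<alpha>^2) + 1 - real k / real n) * (fro_norm (pinv ?X))^2
      \<le> (fro_norm (pinv (col_sub ?X S)))^2"
    using fro_norm_pinv_sel_mat_mod[OF assms(3) n] assms(2) by simp
qed

end
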